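(* Let $l,l'$ be nonparallel lines in the plane, and let $B\in l$, $B'\in l'$ be points, neither of which is the intersection point of $l$ and $l'$. (1) The function $X\mapsto \mathrm{disprod}_{l,l'}(X)$ is strictly concave on the segment $\overline{BB'}$ and is maximized there at the midpoint of $B$ and $B'$. (2) Suppose moreover that $X,X'$ are two distinct points of $\overline{BB'}$ such that $B,X,X',B'$ lie in this order. Then: (a) if $\mathrm{disprod}_{l,l'}$, restricted to $\overline{XX'}$, is maximized at $X'$, then $|BX'|\le \frac12|BB'|$; (b) $|BX|-|B'X'|$ and $\mathrm{disprod}_{l,l'}(X)-\mathrm{disprod}_{l,l'}(X')$ have the same sign.
   Context: For a line $l$ and point $X$, $d_l(X)$ denotes the distance from $X$ to $l$. For two lines $l,l'$, $\mathrm{disprod}_{l,l'}(X)=d_l(X)\cdot d_{l'}(X)$. *)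

theory Defs
  imports "HOL-Analysis.Analysis"
begin

type_synonym point = "real ^ 2"

definition is_line :: "point set \<Rightarrow> bool" where
  "is_line l \<longleftrightarrow> (\<exists>a v. v \<noteq> 0 \<and> l = {a + t *\<^sub>R v | t. True})"

definition dl :: "point set \<Rightarrow> point \<Rightarrow> real" where
  "dl l X = infdist X l"

definition disprod :: "point set \<Rightarrow> point set \<Rightarrow> point \<Rightarrow> real" where
  "disprod l l' X = dl l X * dl l' X"

definition strict_concave_on :: "'a::real_vector set \<Rightarrow> ('a \<Rightarrow> real) \<Rightarrow> bool" where
  "strict_concave_on S f \<longleftrightarrow>
     (\<forall>x\<in>S. \<forall>y\<in>S. \<forall>t::real. x \<noteq> y \<and> 0 < t \<and> t < 1 \<longrightarrow>
        f ((1 - t) *\<^sub>R x + t *\<^sub>R y) > (1 - t) * f x + t * f y)"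

end

theory Submission
  imports Defs
begin

text \<open>
  On the segment write \<open>X t = (1 - t) B + t B'\<close>. A homothety centred at a point of a line
  scales the distance to that line, so the distances of \<open>X t\<close> to \<open>l\<close> and \<open>l'\<close> are
  \<open>t d(B', l)\<close> and \<open>(1 - t) d(B, l')\<close>. Hence \<open>disprod\<close> on the segment is the parabola
  \<open>c t (1 - t)\<close> with \<open>c > 0\<close>, and every claim is a fact about this parabola, whose vertex
  is at \<open>t = 1/2\<close>.
\<close>

lemma is_line_affine: "is_line l \<Longrightarrow> affine l"
  unfolding is_line_def affine_alt
  by (clarsimp, rule_tac x="(1 - u) * t + u * ta" in exI, simp add: algebra_simps)

lemma linepath_combination:
  "(1 - u) *\<^sub>R linepath a b s + u *\<^sub>R linepath a b s' = linepath a b ((1 - u) * s + u * s')"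
  by (simp add: linepath_def algebra_simps)

lemma linepath_swap: "linepath b a (1 - t) = linepath a b t"
  by (simp add: linepath_def algebra_simps)

lemma dist_linepath_start:
  assumes "0 \<le> t"
  shows "dist a (linepath a b t) = t * dist a b"
proof -
  have "a - linepath a b t = t *\<^sub>R (a - b)" by (simp add: linepath_def algebra_simps)
  then show ?thesis using assms by (simp add: dist_norm)
qed

lemma midpoint_eq_linepath: "midpoint a b = linepath a b (1/2)"
  by (simp add: midpoint_def linepath_def scaleR_add_right)

lemma infdist_linepath_le:
  fixes S :: "'a::real_normed_vector set"
  assumes "affine S" "P \<in> S" "t > 0"
  shows "infdist (linepath P Q t) S \<le> t * infdist Q S"
proof -
  have "infdist (linepath P Q t) S / t \<le> dist Q y" if "y \<in> S" for y
  proof -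
    have "linepath P Q t - linepath P y t = t *\<^sub>R (Q - y)"
      by (simp add: linepath_def algebra_simps)
    then have "dist (linepath P Q t) (linepath P y t) = t * dist Q y"
      using \<open>t > 0\<close> by (simp add: dist_norm)
    moreover have "linepath P y t \<in> S"
      using assms(1,2) that unfolding affine_alt linepath_def by blast
    ultimately have "infdist (linepath P Q t) S \<le> t * dist Q y"
      by (metis infdist_le)
    then show ?thesis using \<open>t > 0\<close> by (simp add: field_simps)
  qed
  then have "infdist (linepath P Q t) S / t \<le> infdist Q S"
    using assms(2) by (subst infdist_notempty) (auto intro: cINF_greatest)
  then show ?thesis using \<open>t > 0\<close> by (simp add: field_simps)
qed

lemma infdist_linepath:
  fixes S :: "'a::real_normed_vector set"
  assumes "affine S" "P \<in> S" "t \<ge> 0"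
  shows "infdist (linepath P Q t) S = t * infdist Q S"
proof (cases "t = 0")
  case False
  with assms have t: "t > 0" by simp
  have "linepath P (linepath P Q t) (1 / t) = Q"
    using t by (simp add: linepath_def algebra_simps)
  then have "infdist Q S \<le> (1 / t) * infdist (linepath P Q t) S"
    using infdist_linepath_le[OF assms(1,2), of "1 / t" "linepath P Q t"] t by simp
  then have "t * infdist Q S \<le> infdist (linepath P Q t) S"
    using mult_left_mono[of _ _ t] t by fastforce
  with infdist_linepath_le[OF assms(1,2) t] show ?thesis by (rule antisym)
qed (use assms(2) in \<open>simp add: linepath_def\<close>)

lemma disprod_linepath:
  assumes "is_line l" "is_line l'" "B \<in> l" "B' \<in> l'" "t \<in> {0..1}"
  shows "disprod l l' (linepath B B' t) = infdist B' l * infdist B l' * (t * (1 - t))"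
proof -
  have "dl l (linepath B B' t) = t * infdist B' l"
    unfolding dl_def using assms by (simp add: infdist_linepath is_line_affine)
  moreover have "dl l' (linepath B' B (1 - t)) = (1 - t) * infdist B l'"
    unfolding dl_def using assms by (simp add: infdist_linepath is_line_affine)
  ultimately show ?thesis unfolding disprod_def linepath_swap by (simp add: mult_ac)
qed

lemma parabola_strict_concave:
  fixes s s' u :: real
  assumes "s \<noteq> s'" "0 < u" "u < 1"
  shows "(1 - u) * (s * (1 - s)) + u * (s' * (1 - s'))
         < ((1 - u) * s + u * s') * (1 - ((1 - u) * s + u * s'))"
proof -
  have "0 < u * (1 - u) * (s - s')\<^sup>2" using assms by simp
  also have "\<dots> = ((1 - u) * s + u * s') * (1 - ((1 - u) * s + u * s'))
                   - ((1 - u) * (s * (1 - s)) + u * (s' * (1 - s')))"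
    by (simp add: algebra_simps power2_eq_square)
  finally show ?thesis by simp
qed

lemma parabola_le_quarter:
  fixes t :: real
  shows "t * (1 - t) \<le> 1/2 * (1 - 1/2)"
  using zero_le_power2[of "t - 1/2"] by (simp add: algebra_simps power2_eq_square)

lemma parabola_right_end_max_le_half:
  fixes s s' :: real
  assumes "s < s'" and max: "\<forall>t\<in>{s..s'}. t * (1 - t) \<le> s' * (1 - s')"
  shows "s' \<le> 1/2"
proof (rule ccontr)
  assume "\<not> s' \<le> 1/2"
  define t where "t = max s (1/2)"
  have "t \<in> {s..s'}" "t < s'" "1 - s' < t"
    using assms \<open>\<not> s' \<le> 1/2\<close> unfolding t_def by auto
  have "0 < (s' - t) * (t - (1 - s'))" using \<open>t < s'\<close> \<open>1 - s' < t\<close> by simp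
  also have "\<dots> = t * (1 - t) - s' * (1 - s')" by (simp add: algebra_simps)
  moreover have "t * (1 - t) \<le> s' * (1 - s')" using max \<open>t \<in> {s..s'}\<close> by blast
  ultimately show False by simp
qed

lemma linepath_in_closed_segment_linepath:
  assumes "s \<le> t" "t \<le> s'"
  shows "linepath a b t \<in> closed_segment (linepath a b s) (linepath a b s')"
proof (cases "s = s'")
  case False
  define u where "u = (t - s) / (s' - s)"
  have "u \<in> {0..1}"
    using assms False by (auto simp: u_def field_simps)
  have "u * (s' - s) = t - s"
    using False by (simp add: u_def)
  then have "(1 - u) * s + u * s' = t"
    by (simp add: algebra_simps)
  then show ?thesis
    using \<open>u \<in> {0..1}\<close> unfolding linepath_image_01[symmetric]
    by (metis linepath_combination linepath_def image_eqI)
qed (use assms in simp)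

lemma closed_segment_ordered_params:
  assumes "X \<in> closed_segment B B'" "X' \<in> closed_segment B B'" "dist B X < dist B X'"
  obtains s s' where "0 \<le> s" "s < s'" "s' \<le> 1" "X = linepath B B' s" "X' = linepath B B' s'"
proof -
  obtain s s' where s: "s \<in> {0..1}" "X = linepath B B' s" and s': "s' \<in> {0..1}" "X' = linepath B B' s'"
    using assms(1,2) unfolding linepath_image_01[symmetric] by blast
  then have "s < s'"
    using assms(3) by (auto simp: dist_linepath_start mult_less_cancel_right)
  with s s' that show ?thesis by auto
qed

context
  fixes g :: "'a::real_normed_vector \<Rightarrow> real" and B B' :: 'a and c :: real
  assumes g_linepath: "\<And>t. t \<in> {0..1} \<Longrightarrow> g (linepath B B' t) = c * (t * (1 - t))"
    and c_pos: "c > 0"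
begin

lemma strict_concave_on_segment_parabola:
  assumes "B \<noteq> B'"
  shows "strict_concave_on (closed_segment B B') g"
  unfolding strict_concave_on_def
proof (intro ballI allI impI)
  fix x y and u :: real
  assume "x \<in> closed_segment B B'" "y \<in> closed_segment B B'" and h: "x \<noteq> y \<and> 0 < u \<and> u < 1"
  then obtain s s' where s: "s \<in> {0..1}" "x = linepath B B' s" and s': "s' \<in> {0..1}" "y = linepath B B' s'"
    unfolding linepath_image_01[symmetric] by blast
  have r: "(1 - u) * s + u * s' \<in> {0..1}"
    using s(1) s'(1) h by (auto intro: linepath_le_1)
  have "s \<noteq> s'" using h s s' by auto
  with h have "c * ((1 - u) * (s * (1 - s)) + u * (s' * (1 - s')))
      < c * (((1 - u) * s + u * s') * (1 - ((1 - u) * s + u * s')))"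
    by (intro mult_strict_left_mono parabola_strict_concave c_pos) auto
  then show "(1 - u) * g x + u * g y < g ((1 - u) *\<^sub>R x + u *\<^sub>R y)"
    unfolding s(2) s'(2) linepath_combination g_linepath[OF r] g_linepath[OF s(1)] g_linepath[OF s'(1)]
    by (simp add: algebra_simps)
qed

lemma segment_parabola_le_midpoint:
  assumes "Y \<in> closed_segment B B'"
  shows "g Y \<le> g (midpoint B B')"
proof -
  obtain t where "t \<in> {0..1}" "Y = linepath B B' t"
    using assms unfolding linepath_image_01[symmetric] by blast
  then show ?thesis
    using mult_left_mono[OF parabola_le_quarter, of c t] c_pos
    by (simp add: midpoint_eq_linepath g_linepath)
qed

lemma segment_parabola_max_at_far_end:
  assumes "X \<in> closed_segment B B'" "X' \<in> closed_segment B B'" "dist B X < dist B X'"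
    and max: "\<forall>Y\<in>closed_segment X X'. g Y \<le> g X'"
  shows "dist B X' \<le> dist B B' / 2"
proof -
  obtain s s' where s: "0 \<le> s" "s < s'" "s' \<le> 1" "X = linepath B B' s" "X' = linepath B B' s'"
    using closed_segment_ordered_params[OF assms(1-3)] .
  have "t * (1 - t) \<le> s' * (1 - s')" if "t \<in> {s..s'}" for t
  proof -
    have "g (linepath B B' t) \<le> g X'"
      using max that s by (auto intro: linepath_in_closed_segment_linepath)
    then show ?thesis using that s c_pos by (simp add: g_linepath)
  qed
  then have "s' \<le> 1/2" using parabola_right_end_max_le_half[OF s(2)] by blast
  then show ?thesis
    using s mult_right_mono[of "2 * s'" 1 "dist B B'"] by (simp add: dist_linepath_start)
qed

lemma segment_parabola_sgn_diff:
  assumes "X \<in> closed_segment B B'" "X' \<in> closed_segment B B'" "dist B X < dist B X'"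
  shows "sgn (dist B X - dist B' X') = sgn (g X - g X')"
proof -
  obtain s s' where s: "0 \<le> s" "s < s'" "s' \<le> 1" "X = linepath B B' s" "X' = linepath B B' s'"
    using closed_segment_ordered_params[OF assms] .
  have "B \<noteq> B'" using assms(3) s by auto
  have "dist B X - dist B' X' = dist B B' * (s + s' - 1)"
    using s dist_linepath_start[of "1 - s'" B' B]
    by (simp add: dist_linepath_start linepath_swap dist_commute algebra_simps)
  moreover have "g X - g X' = c * (s' - s) * (s + s' - 1)"
    using s by (simp add: g_linepath algebra_simps)
  ultimately show ?thesis
    using \<open>B \<noteq> B'\<close> c_pos s by (simp add: sgn_mult)
qed

end

theorem lemma3:
  fixes l l' :: "point set" and B B' :: point
  assumes "is_line l" and "is_line l'"
    and "\<not> affine_parallel l l'"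
    and "B \<in> l" and "B' \<in> l'"
    and "B \<notin> l \<inter> l'" and "B' \<notin> l \<inter> l'"
  shows "strict_concave_on (closed_segment B B') (disprod l l')
         \<and> (\<forall>Y\<in>closed_segment B B'. disprod l l' Y \<le> disprod l l' (midpoint B B'))
         \<and> (\<forall>X X'. X \<in> closed_segment B B' \<and> X' \<in> closed_segment B B' \<and> X \<noteq> X'
                  \<and> dist B X < dist B X' \<longrightarrow>
              ((\<forall>Y\<in>closed_segment X X'. disprod l l' Y \<le> disprod l l' X')
                  \<longrightarrow> dist B X' \<le> dist B B' / 2)
            \<and> sgn (dist B X - dist B' X') = sgn (disprod l l' X - disprod l l' X'))"
proof -
  have "0 < infdist B' l" "0 < infdist B l'"
    using assms by (auto intro!: infdist_pos_not_in_closed affine_closed is_line_affine)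
  then have c: "0 < infdist B' l * infdist B l'" by simp
  have "B \<noteq> B'" using assms by auto
  note parabola = disprod_linepath[OF assms(1,2,4,5)]
  show ?thesis
    using strict_concave_on_segment_parabola[OF parabola c \<open>B \<noteq> B'\<close>]
      segment_parabola_le_midpoint[OF parabola c]
      segment_parabola_max_at_far_end[OF parabola c]
      segment_parabola_sgn_diff[OF parabola c]
    by blast
qed

end
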